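(* Let $S$ be a semigroup with finite $\mathcal{R}$-height, and let $A$ be a left ideal of $S$. Let $n$ be the maximum length of a chain of $\mathcal{R}$-classes of $S$ each of which intersects $A$. Then $\mathrm{H}_{\mathcal{R}}(A)\leq 2n$.
   Context: For a semigroup $S$, $S^1$ denotes $S$ with an identity adjoined if necessary. Green's preorder: $a\leq_{\mathcal{R}} b$ iff $aS^1\subseteq bS^1$; $\mathcal{R}$ is the associated equivalence. $\mathcal{R}$-classes are ordered by $R_a\leq R_b$ iff $a\leq_{\mathcal{R}} b$, and the $\mathcal{R}$-height $\mathrm{H}_{\mathcal{R}}(S)$ is the supremum of the cardinalities of chains of $\mathcal{R}$-classes. A left ideal is a non-empty subset $A$ with $SA\subseteq A$; $\mathrm{H}_{\mathcal{R}}(A)$ is computed in the semigroup $A$ itself. *)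

theory Defs
  imports Main "HOL-Library.Extended_Nat"
begin

text \<open>The semigroup S is the whole type 'a (class semigroup_mult). Green's relations
are computed inside a subsemigroup T (T = UNIV for S itself), with T^1 = T plus identity.\<close>

definition R_le :: "'a::semigroup_mult set \<Rightarrow> 'a \<Rightarrow> 'a \<Rightarrow> bool" where
  "R_le T a b \<longleftrightarrow> a = b \<or> (\<exists>x\<in>T. a = b * x)"

definition R_class :: "'a::semigroup_mult set \<Rightarrow> 'a \<Rightarrow> 'a set" where
  "R_class T a = {b \<in> T. R_le T a b \<and> R_le T b a}"

definition R_classes :: "'a::semigroup_mult set \<Rightarrow> 'a set set" where
  "R_classes T = R_class T ` T"

definition R_class_le :: "'a::semigroup_mult set \<Rightarrow> 'a set \<Rightarrow> 'a set \<Rightarrow> bool" where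
  "R_class_le T X Y \<longleftrightarrow> (\<exists>a\<in>T. \<exists>b\<in>T. X = R_class T a \<and> Y = R_class T b \<and> R_le T a b)"

definition R_chain :: "'a::semigroup_mult set \<Rightarrow> 'a set set \<Rightarrow> bool" where
  "R_chain T C \<longleftrightarrow> C \<subseteq> R_classes T \<and> (\<forall>X\<in>C. \<forall>Y\<in>C. R_class_le T X Y \<or> R_class_le T Y X)"

text \<open>R-height: supremum of cardinalities of chains of R-classes (finite chains suffice,
since an infinite chain has arbitrarily large finite subchains).\<close>
definition R_height :: "'a::semigroup_mult set \<Rightarrow> enat" where
  "R_height T = Sup {enat (card C) | C. finite C \<and> R_chain T C}"

definition left_ideal :: "'a::semigroup_mult set \<Rightarrow> bool" where
  "left_ideal A \<longleftrightarrow> A \<noteq> {} \<and> (\<forall>s a. a \<in> A \<longrightarrow> s * a \<in> A)"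

end

theory Submission
  imports Defs
begin

text \<open>Choose a representative in A of each R-class of a chain of R-classes of A, and send it
to its R-class in S. The image is a chain of R-classes of S meeting A. At most two
representatives land in the same R-class of S: if p < q in the R-order of A and q \<le> r in the
R-order of S, say q = r u, then p = q x with x \<in> A gives p = r (u x) with u x \<in> A, since A is
a left ideal; so p \<le> r in the R-order of A. Three representatives p < q < r in the R-order
of A inside one R-class of S would therefore give q \<le> p. So a chain in A has at most twice
as many classes as its image.\<close>

lemma left_ideal_mult_closed: "left_ideal A \<Longrightarrow> x \<in> A \<Longrightarrow> y \<in> A \<Longrightarrow> x * y \<in> A"
  unfolding left_ideal_def by blast

lemma R_le_refl: "R_le T a a"
  by (simp add: R_le_def)

lemma R_le_trans:
  assumes "\<And>x y. x \<in> T \<Longrightarrow> y \<in> T \<Longrightarrow> x * y \<in> T" and "R_le T a b" and "R_le T b c"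
  shows "R_le T a c"
  using assms unfolding R_le_def by (metis mult.assoc)

lemma R_le_UNIV: "R_le T a b \<Longrightarrow> R_le UNIV a b"
  unfolding R_le_def by blast

lemma R_le_left_ideal_strict_trans:
  assumes "left_ideal A" and "R_le A p q" and "\<not> R_le A q p" and "R_le UNIV q r"
  shows "R_le A p r"
proof -
  from assms(2,3) obtain x where x: "x \<in> A" "p = q * x"
    unfolding R_le_def by (metis R_le_refl)
  from assms(4) consider "q = r" | u where "q = r * u"
    unfolding R_le_def by blast
  then show ?thesis
  proof cases
    case 1
    then show ?thesis using x unfolding R_le_def by blast
  next
    case (2 u)
    then have "p = r * (u * x)" using x by (simp add: mult.assoc)
    moreover have "u * x \<in> A" using assms(1) x unfolding left_ideal_def by blast
    ultimately show ?thesis unfolding R_le_def by blast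
  qed
qed

lemma R_class_self: "a \<in> T \<Longrightarrow> a \<in> R_class T a"
  unfolding R_class_def by (simp add: R_le_refl)

lemma R_class_eq:
  assumes "\<And>x y. x \<in> T \<Longrightarrow> y \<in> T \<Longrightarrow> x * y \<in> T" and "b \<in> R_class T a"
  shows "R_class T b = R_class T a"
  using assms(2) R_le_trans[OF assms(1)] unfolding R_class_def by blast

lemma R_class_le_iff:
  assumes "\<And>x y. x \<in> T \<Longrightarrow> y \<in> T \<Longrightarrow> x * y \<in> T" and "a \<in> T" and "b \<in> T"
  shows "R_class_le T (R_class T a) (R_class T b) \<longleftrightarrow> R_le T a b"
proof
  assume "R_class_le T (R_class T a) (R_class T b)"
  then obtain a' b' where "a \<in> R_class T a'" "b \<in> R_class T b'" "R_le T a' b'"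
    unfolding R_class_le_def using R_class_self assms(2,3) by metis
  then show "R_le T a b"
    unfolding R_class_def using R_le_trans[OF assms(1)] by blast
qed (use assms(2,3) in \<open>auto simp: R_class_le_def\<close>)

definition R_elem_chain :: "'a::semigroup_mult set \<Rightarrow> 'a set \<Rightarrow> bool" where
  "R_elem_chain T P \<longleftrightarrow> P \<subseteq> T \<and> (\<forall>p\<in>P. \<forall>q\<in>P. R_le T p q \<or> R_le T q p)
    \<and> (\<forall>p\<in>P. \<forall>q\<in>P. R_le T p q \<and> R_le T q p \<longrightarrow> p = q)"

lemma R_chain_obtain_R_elem_chain:
  assumes closed: "\<And>x y. x \<in> T \<Longrightarrow> y \<in> T \<Longrightarrow> x * y \<in> T" and "finite C" and "R_chain T C"
  obtains P where "R_elem_chain T P" and "finite P" and "card P = card C"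
proof
  define rep where "rep X = (SOME p. p \<in> X)" for X :: "'a set"
  have rep: "rep X \<in> T \<and> X = R_class T (rep X)" if "X \<in> C" for X
  proof -
    from assms(3) that obtain a where a: "a \<in> T" "X = R_class T a"
      unfolding R_chain_def R_classes_def by auto
    then have "rep X \<in> X"
      unfolding rep_def using R_class_self by (metis someI)
    then show ?thesis
      using a R_class_eq[OF closed] unfolding R_class_def by auto
  qed
  then have "inj_on rep C"
    by (metis inj_onI)
  then show "card (rep ` C) = card C"
    by (rule card_image)
  show "finite (rep ` C)"
    using assms(2) by simp
  show "R_elem_chain T (rep ` C)"
    unfolding R_elem_chain_def
  proof (intro conjI ballI impI)
    show "rep ` C \<subseteq> T"
      using rep by blast
  next
    fix p q assume "p \<in> rep ` C" "q \<in> rep ` C"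
    then obtain X Y where XY: "X \<in> C" "Y \<in> C" "p = rep X" "q = rep Y"
      by blast
    then show "R_le T p q \<or> R_le T q p"
      using assms(3) rep R_class_le_iff[OF closed] unfolding R_chain_def by metis
    assume "R_le T p q \<and> R_le T q p"
    then have "q \<in> R_class T p"
      using XY rep unfolding R_class_def by auto
    then show "p = q"
      using XY rep R_class_eq[OF closed] by metis
  qed
qed

lemma R_elem_chain_R_classes_UNIV:
  assumes "R_elem_chain A P"
  shows "R_chain UNIV (R_class UNIV ` P)" and "\<forall>X\<in>R_class UNIV ` P. X \<inter> A \<noteq> {}"
  using assms R_le_UNIV R_class_self
  unfolding R_elem_chain_def R_chain_def R_classes_def R_class_le_def by blast+

lemma R_elem_chain_fibre_subset:
  assumes "left_ideal A" and chain: "R_elem_chain A P"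
    and F: "F \<subseteq> P" "\<forall>x\<in>F. \<forall>y\<in>F. R_le UNIV x y"
    and pq: "p \<in> F" "q \<in> F" "p \<noteq> q" "R_le A p q"
  shows "F \<subseteq> {p, q}"
proof
  have le: "R_le A x y \<or> R_le A y x" and antisym: "R_le A x y \<Longrightarrow> R_le A y x \<Longrightarrow> x = y"
    if "x \<in> F" "y \<in> F" for x y
    using chain F(1) that unfolding R_elem_chain_def by blast+
  have strict_trans: "R_le A x z" if "x \<in> F" "y \<in> F" "z \<in> F" "x \<noteq> y" "R_le A x y" for x y z
    using R_le_left_ideal_strict_trans[OF assms(1)] antisym F(2) that by metis
  fix r assume r: "r \<in> F"
  show "r \<in> {p, q}"
  proof (rule ccontr)
    assume "r \<notin> {p, q}"
    then have "r \<noteq> p" "r \<noteq> q" by auto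
    have "R_le A p r"
      using strict_trans pq r by blast
    have "R_le A r q"
      using le[OF r pq(2)] strict_trans[OF pq(2) r pq(1)] antisym[OF pq(1,2)] pq(3,4) \<open>r \<noteq> q\<close> by auto
    then have "R_le A r p"
      using strict_trans[OF r pq(2) pq(1)] \<open>r \<noteq> q\<close> by blast
    with \<open>R_le A p r\<close> show False
      using antisym r pq(1) \<open>r \<noteq> p\<close> by blast
  qed
qed

lemma R_elem_chain_card_fibre_le_2:
  assumes "left_ideal A" and chain: "R_elem_chain A P"
    and F: "F \<subseteq> P" "\<forall>x\<in>F. \<forall>y\<in>F. R_le UNIV x y"
  shows "card F \<le> 2"
proof (cases "\<exists>p\<in>F. \<exists>q\<in>F. p \<noteq> q")
  case True
  then obtain p q where pq: "p \<in> F" "q \<in> F" "p \<noteq> q" "R_le A p q"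
    using chain F(1) unfolding R_elem_chain_def by blast
  then have "card F \<le> card {p, q}"
    using R_elem_chain_fibre_subset[OF assms] by (intro card_mono) auto
  also have "\<dots> \<le> 2"
    by (simp add: card_insert_if)
  finally show ?thesis .
next
  case False
  then obtain p where "F \<subseteq> {p}"
    by blast
  then have "card F \<le> card {p}"
    by (intro card_mono) auto
  then show ?thesis
    by simp
qed

lemma card_le_mult_card_image:
  assumes "finite A" and "\<And>y. card {x \<in> A. f x = y} \<le> k"
  shows "card A \<le> k * card (f ` A)"
proof -
  have "card A = card (\<Union>y\<in>f ` A. {x \<in> A. f x = y})"
    by (rule arg_cong[where f = card]) auto
  also have "\<dots> \<le> (\<Sum>y\<in>f ` A. card {x \<in> A. f x = y})"
    using assms(1) by (intro card_UN_le) simp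
  also have "\<dots> \<le> (\<Sum>y\<in>f ` A. k)"
    by (intro sum_mono assms(2))
  finally show ?thesis
    by (simp add: mult.commute)
qed

lemma R_elem_chain_card_le_twice_R_classes_UNIV:
  assumes "left_ideal A" and "R_elem_chain A P" and "finite P"
  shows "card P \<le> 2 * card (R_class UNIV ` P)"
proof (rule card_le_mult_card_image[OF assms(3)])
  fix Y
  show "card {p \<in> P. R_class UNIV p = Y} \<le> 2"
  proof (rule R_elem_chain_card_fibre_le_2[OF assms(1,2)])
    show "\<forall>x\<in>{p \<in> P. R_class UNIV p = Y}. \<forall>y\<in>{p \<in> P. R_class UNIV p = Y}. R_le UNIV x y"
      using R_class_self[of _ UNIV] unfolding R_class_def by blast
  qed blast
qed

theorem theorem3p8:
  fixes A :: "'a::semigroup_mult set"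
  assumes "R_height (UNIV :: 'a set) < \<infinity>"
    and "left_ideal A"
  shows "R_height A \<le>
    2 * Sup {enat (card C) | C. finite C \<and> R_chain (UNIV :: 'a set) C \<and> (\<forall>X\<in>C. X \<inter> A \<noteq> {})}"
  (is "_ \<le> 2 * Sup ?B")
proof -
  have "enat (card C) \<le> 2 * Sup ?B" if C: "finite C" "R_chain A C" for C
  proof -
    obtain P where P: "R_elem_chain A P" "finite P" "card P = card C"
      by (rule R_chain_obtain_R_elem_chain[OF left_ideal_mult_closed[OF assms(2)] C])
    have "enat (card (R_class UNIV ` P)) \<in> ?B"
      using R_elem_chain_R_classes_UNIV[OF P(1)] P(2) by blast
    have "card C \<le> 2 * card (R_class UNIV ` P)"
      using R_elem_chain_card_le_twice_R_classes_UNIV[OF assms(2) P(1,2)] P(3) by simp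
    then have "enat (card C) \<le> 2 * enat (card (R_class UNIV ` P))"
      by (simp add: numeral_eq_enat)
    also have "\<dots> \<le> 2 * Sup ?B"
      using Sup_upper[OF \<open>enat (card (R_class UNIV ` P)) \<in> ?B\<close>] by (rule mult_left_mono) simp
    finally show ?thesis .
  qed
  then show ?thesis
    unfolding R_height_def by (blast intro: Sup_least)
qed

end
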